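(* Let $\mathcal{C}=(V,\mathcal{R})$ be a coherent configuration with fibers $X,Y$ such that $m=|X|=|Y|$ is a prime, $r=|\mathcal{R}_X|>2$ and $|\mathcal{R}_{X,Y}|>1$, and let $k=\frac{m-1}{r-1}$. If $(k,m)=(35,71)$ and $1\notin\{d_S\mid S\in\mathcal{R}_{X,Y}\}$, then $\{d_S\mid S\in\mathcal{R}_{X,Y}\}=\{15,21,35\}$.
   Context: A coherent configuration is a pair $\mathcal{C}=(V,\mathcal{R})$ where $V$ is a finite set and $\mathcal{R}$ is a partition of $V\times V$ into nonempty sets such that: (1) the diagonal $\Delta_V$ is a union of members of $\mathcal{R}$; (2) for each $R\in\mathcal{R}$ its transpose $R^t=\{(u,v)\mid (v,u)\in R\}$ belongs to $\mathcal{R}$; (3) for all $R,S,T\in\mathcal{R}$ there is a constant $c_{RS}^T$ with $c_{RS}^T=|R(u)\cap S^t(v)|$ for all $(u,v)\in T$, where $T(w)=\{z\in V\mid (w,z)\in T\}$. A subset $X\subseteq V$ is a fiber if $\Delta_X\in\mathcal{R}$. For fibers $X,Y$, $\mathcal{R}_{X,Y}=\{R\in\mathcal{R}\mid R\subseteq X\times Y\}$, $\mathcal{R}_X=\mathcal{R}_{X,X}$, and for $R\in\mathcal{R}_{X,Y}$, $d_R=c_{RR^t}^{\Delta_X}=|R(x)|$ for any $x\in X$. *)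

theory Defs
  imports Complex_Main "HOL-Computational_Algebra.Primes"
begin

definition out_nbhd :: "('a \<times> 'a) set \<Rightarrow> 'a \<Rightarrow> 'a set" where
  "out_nbhd T w = {z. (w, z) \<in> T}"

definition coherent_configuration :: "'a set \<Rightarrow> ('a \<times> 'a) set set \<Rightarrow> bool" where
  "coherent_configuration V \<R> \<longleftrightarrow>
     finite V \<and>
     (\<forall>S\<in>\<R>. S \<noteq> {}) \<and>
     \<Union>\<R> = V \<times> V \<and>
     (\<forall>S\<in>\<R>. \<forall>T\<in>\<R>. S \<noteq> T \<longrightarrow> S \<inter> T = {}) \<and>
     (\<exists>\<Q>\<subseteq>\<R>. \<Union>\<Q> = Id_on V) \<and>
     (\<forall>S\<in>\<R>. converse S \<in> \<R>) \<and>
     (\<forall>R\<in>\<R>. \<forall>S\<in>\<R>. \<forall>T\<in>\<R>. \<exists>c::nat. \<forall>(u, v)\<in>T.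
        card (out_nbhd R u \<inter> out_nbhd (converse S) v) = c)"

definition fiber :: "('a \<times> 'a) set set \<Rightarrow> 'a set \<Rightarrow> bool" where
  "fiber \<R> X \<longleftrightarrow> Id_on X \<in> \<R>"

definition rels_between :: "('a \<times> 'a) set set \<Rightarrow> 'a set \<Rightarrow> 'a set \<Rightarrow> ('a \<times> 'a) set set" where
  "rels_between \<R> X Y = {S \<in> \<R>. S \<subseteq> X \<times> Y}"

text \<open>Valency d_S = |S(x)| for x in the source fiber; we take x to be some point of
the domain of S (for S in R_{X,Y} this is a point of X, and the value does not
depend on the choice by coherence).\<close>
definition valency :: "('a \<times> 'a) set \<Rightarrow> nat" where
  "valency S = card (out_nbhd S (SOME x. x \<in> Domain S))"

end

(*
  From (m - 1)/(r - 1) = 35 and m = 71 the fiber X has rank 3, so R_X = {1_X, A, B}.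

  If A is symmetric it is a strongly regular graph on 71 points. For its adjacency matrix G
  a suitable shift N = G + beta J satisfies a quadratic equation; the trace of N then
  expresses k through the multiplicities f and c of the two nontrivial eigenvalues. If f = c
  the number of points is 1 mod 4, while 71 is 3 mod 4; otherwise the eigenvalues r, r' are
  integers with (k - r)(k - r') = 71 mu, and divisibility by the prime 71 is impossible.

  Hence B = A^t and both have valency 35. For S in R_{X,Y}, any two points of X then have the
  same number p_S of common S-neighbours, and double counting gives d_S (d_S - 1) = 70 p_S,
  so d_S is one of 15, 21, 35, 36, 50, 56, 70. Counting common S-neighbours along A-edges
  rules out |R_{X,Y}| = 2, and the only way to write 71 as a sum of at least three of these
  numbers is 15 + 21 + 35.
*)

theory Submission
  imports Defs "Jordan_Normal_Form.Schur_Decomposition"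
begin

section \<open>Coherent configurations\<close>

lemma out_nbhd_converse [simp]: "out_nbhd (converse S) v = {z. (z, v) \<in> S}"
  by (auto simp: out_nbhd_def)

lemma out_nbhd_subset: "S \<subseteq> X \<times> Y \<Longrightarrow> out_nbhd S x \<subseteq> Y"
  by (auto simp: out_nbhd_def)

lemma sum_card_filter_swap:
  assumes "finite I" "finite J"
  shows "(\<Sum>i\<in>I. card {j\<in>J. P i j}) = (\<Sum>j\<in>J. card {i\<in>I. P i j})"
proof -
  have "\<And>i. card {j\<in>J. P i j} = (\<Sum>j\<in>J. if P i j then 1 else 0)"
    "\<And>j. card {i\<in>I. P i j} = (\<Sum>i\<in>I. if P i j then 1 else 0)"
    using assms by (simp_all add: sum.inter_filter[symmetric])
  then show ?thesis by (simp add: sum.swap[of _ I])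
qed

locale coherent_config =
  fixes V :: "'a set" and \<R> :: "('a \<times> 'a) set set"
  assumes cc: "coherent_configuration V \<R>"
begin

lemma finite_V: "finite V"
  and rel_nonempty: "S \<in> \<R> \<Longrightarrow> S \<noteq> {}"
  and Union_rels: "\<Union>\<R> = V \<times> V"
  and rel_disjoint: "S \<in> \<R> \<Longrightarrow> T \<in> \<R> \<Longrightarrow> S \<noteq> T \<Longrightarrow> S \<inter> T = {}"
  and converse_rel: "S \<in> \<R> \<Longrightarrow> converse S \<in> \<R>"
  and intersection_numbers: "\<forall>R\<in>\<R>. \<forall>S\<in>\<R>. \<forall>T\<in>\<R>. \<exists>c::nat. \<forall>(u, v)\<in>T.
        card (out_nbhd R u \<inter> out_nbhd (converse S) v) = c"
  using cc unfolding coherent_configuration_def by simp_all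

lemma rel_subset: "S \<in> \<R> \<Longrightarrow> S \<subseteq> V \<times> V"
  using Union_rels by blast

lemma rel_cover: "p \<in> V \<times> V \<Longrightarrow> \<exists>S\<in>\<R>. p \<in> S"
  using Union_rels by blast

lemma rel_unique: "S \<in> \<R> \<Longrightarrow> T \<in> \<R> \<Longrightarrow> p \<in> S \<Longrightarrow> p \<in> T \<Longrightarrow> S = T"
  using rel_disjoint by blast

lemma intersection_number_eq:
  assumes "R \<in> \<R>" "S \<in> \<R>" "T \<in> \<R>" "(u, v) \<in> T" "(u', v') \<in> T"
  shows "card (out_nbhd R u \<inter> out_nbhd (converse S) v)
       = card (out_nbhd R u' \<inter> out_nbhd (converse S) v')"
proof -
  obtain c :: nat where c: "\<forall>(u, v)\<in>T. card (out_nbhd R u \<inter> out_nbhd (converse S) v) = c"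
    using intersection_numbers assms(1-3) by blast
  from bspec[OF c assms(4)] bspec[OF c assms(5)] show ?thesis by simp
qed

lemma fiber_subset: "fiber \<R> X \<Longrightarrow> X \<subseteq> V"
  unfolding fiber_def using rel_subset by (fastforce simp: Id_on_def)

lemma finite_fiber: "fiber \<R> X \<Longrightarrow> finite X"
  using fiber_subset finite_V finite_subset by blast

lemma fiber_nonempty: "fiber \<R> X \<Longrightarrow> X \<noteq> {}"
  unfolding fiber_def using rel_nonempty by fastforce

text \<open>The intersection number of Id_on X and S at a pair of S is 1 or 0 according as the
  pair starts in X or not.\<close>
lemma rel_source_in_fiber:
  assumes X: "fiber \<R> X" and S: "S \<in> \<R>" and "(u, v) \<in> S" "u \<in> X" and "(u', v') \<in> S"
  shows "u' \<in> X"
proof (rule ccontr)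
  assume "u' \<notin> X"
  have I: "Id_on X \<in> \<R>" using X by (simp add: fiber_def)
  have "card (out_nbhd (Id_on X) u \<inter> out_nbhd (converse S) v)
      = card (out_nbhd (Id_on X) u' \<inter> out_nbhd (converse S) v')"
    using intersection_number_eq[OF I S S] assms by blast
  moreover have "out_nbhd (Id_on X) u \<inter> out_nbhd (converse S) v = {u}"
    using assms by (auto simp: out_nbhd_def)
  moreover have "out_nbhd (Id_on X) u' \<inter> out_nbhd (converse S) v' = {}"
    using \<open>u' \<notin> X\<close> by (auto simp: out_nbhd_def)
  ultimately show False by simp
qed

lemma rel_target_in_fiber:
  assumes "fiber \<R> Y" "S \<in> \<R>" "(u, v) \<in> S" "v \<in> Y" "(u', v') \<in> S"
  shows "v' \<in> Y"
  using rel_source_in_fiber[of Y "converse S" v u v' u'] assms converse_rel by simp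

lemma rel_subset_fibers:
  assumes "fiber \<R> X" "fiber \<R> Y" "S \<in> \<R>" "(x, y) \<in> S" "x \<in> X" "y \<in> Y"
  shows "S \<subseteq> X \<times> Y"
  using rel_source_in_fiber[OF assms(1,3,4,5)] rel_target_in_fiber[OF assms(2,3,4,6)] by auto

lemma rels_between_cover:
  assumes X: "fiber \<R> X" and Y: "fiber \<R> Y" and "x \<in> X" "y \<in> Y"
  shows "\<exists>S\<in>rels_between \<R> X Y. (x, y) \<in> S"
proof -
  obtain S where "S \<in> \<R>" "(x, y) \<in> S"
    using rel_cover fiber_subset[OF X] fiber_subset[OF Y] assms(3,4) by blast
  with rel_subset_fibers[OF X Y] assms(3,4) show ?thesis
    unfolding rels_between_def by blast
qed

lemma finite_rels_between: "finite (rels_between \<R> X Y)"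
proof -
  have "rels_between \<R> X Y \<subseteq> Pow (V \<times> V)"
    using rel_subset by (auto simp: rels_between_def)
  then show ?thesis using finite_V by (meson finite_Pow_iff finite_SigmaI finite_subset)
qed

lemma card_out_nbhd_eq_valency:
  assumes X: "fiber \<R> X" and S: "S \<in> \<R>" "S \<subseteq> X \<times> Y" and x: "x \<in> X"
  shows "card (out_nbhd S x) = valency S"
proof -
  define x0 where "x0 = (SOME z. z \<in> Domain S)"
  have "x0 \<in> Domain S"
    unfolding x0_def using rel_nonempty[OF S(1)] by (metis Domain.DomainI ex_in_conv prod.exhaust someI)
  then have "x0 \<in> X" using S(2) by auto
  have I: "Id_on X \<in> \<R>" using X by (simp add: fiber_def)
  have "card (out_nbhd S x \<inter> out_nbhd (converse (converse S)) x)
      = card (out_nbhd S x0 \<inter> out_nbhd (converse (converse S)) x0)"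
    using intersection_number_eq[OF S(1) converse_rel[OF S(1)] I] x \<open>x0 \<in> X\<close> by blast
  then show ?thesis by (simp add: valency_def x0_def out_nbhd_def)
qed

lemma valency_pos:
  assumes "fiber \<R> X" "fiber \<R> Y" "S \<in> \<R>" "S \<subseteq> X \<times> Y"
  shows "valency S > 0"
proof -
  obtain x y where xy: "(x, y) \<in> S" using rel_nonempty[OF assms(3)] by auto
  then have "y \<in> out_nbhd S x" by (simp add: out_nbhd_def)
  moreover have "finite (out_nbhd S x)"
    using finite_fiber[OF assms(2)] out_nbhd_subset[OF assms(4)] finite_subset by blast
  ultimately have "card (out_nbhd S x) > 0" by (auto simp: card_gt_0_iff)
  moreover have "x \<in> X" using xy assms(4) by auto
  ultimately show ?thesis using card_out_nbhd_eq_valency[OF assms(1,3,4)] by simp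
qed

lemma sum_valency_rels_between:
  assumes X: "fiber \<R> X" and Y: "fiber \<R> Y" and x: "x \<in> X"
  shows "(\<Sum>S\<in>rels_between \<R> X Y. valency S) = card Y"
proof -
  have "(\<Union>S\<in>rels_between \<R> X Y. out_nbhd S x) = Y"
    using rels_between_cover[OF X Y x] by (auto simp: rels_between_def out_nbhd_def)
  moreover have "card (\<Union>S\<in>rels_between \<R> X Y. out_nbhd S x)
      = (\<Sum>S\<in>rels_between \<R> X Y. card (out_nbhd S x))"
  proof (rule card_UN_disjoint[OF finite_rels_between])
    show "\<forall>S\<in>rels_between \<R> X Y. finite (out_nbhd S x)"
      using finite_fiber[OF Y] by (auto simp: rels_between_def intro: finite_subset[OF out_nbhd_subset])
    show "\<forall>S\<in>rels_between \<R> X Y. \<forall>T\<in>rels_between \<R> X Y.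
        S \<noteq> T \<longrightarrow> out_nbhd S x \<inter> out_nbhd T x = {}"
      using rel_disjoint by (auto simp: rels_between_def out_nbhd_def)
  qed
  moreover have "card (out_nbhd S x) = valency S" if "S \<in> rels_between \<R> X Y" for S
    using that card_out_nbhd_eq_valency[OF X _ _ x] by (auto simp: rels_between_def)
  ultimately show ?thesis by simp
qed

lemma valency_less_card:
  assumes X: "fiber \<R> X" and Y: "fiber \<R> Y" and "card (rels_between \<R> X Y) > 1"
    and S: "S \<in> rels_between \<R> X Y"
  shows "valency S < card Y"
proof -
  have "\<not> rels_between \<R> X Y \<subseteq> {S}"
    using assms(3) card_mono[of "{S}" "rels_between \<R> X Y"] by auto
  then obtain T where T: "T \<in> rels_between \<R> X Y" "T \<noteq> S" by blast
  obtain x where "x \<in> X" using fiber_nonempty[OF X] by auto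
  have "(\<Sum>U\<in>{S, T}. valency U) \<le> (\<Sum>U\<in>rels_between \<R> X Y. valency U)"
    by (rule sum_mono2[OF finite_rels_between]) (use S T in auto)
  moreover have "valency T > 0"
    using valency_pos[OF X Y] T(1) by (simp add: rels_between_def)
  ultimately show ?thesis
    using sum_valency_rels_between[OF X Y \<open>x \<in> X\<close>] T(2) by simp
qed

lemma card_rel_eq:
  assumes X: "fiber \<R> X" and Y: "fiber \<R> Y" and S: "S \<in> \<R>" "S \<subseteq> X \<times> Y"
  shows "card S = card X * valency S"
proof -
  have "S = Sigma X (out_nbhd S)" using S(2) by (auto simp: out_nbhd_def)
  then have "card S = (\<Sum>x\<in>X. card (out_nbhd S x))"
    using finite_fiber[OF X] finite_fiber[OF Y] out_nbhd_subset[OF S(2)]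
    by (metis card_SigmaI finite_subset)
  also have "\<dots> = card X * valency S"
    using card_out_nbhd_eq_valency[OF X S] by simp
  finally show ?thesis .
qed

lemma valency_converse:
  assumes X: "fiber \<R> X" and Y: "fiber \<R> Y" and S: "S \<in> \<R>" "S \<subseteq> X \<times> Y"
    and "card X = card Y"
  shows "valency (converse S) = valency S"
proof -
  have "card (converse S) = card Y * valency (converse S)"
    using card_rel_eq[OF Y X converse_rel[OF S(1)]] S(2) by auto
  moreover have "card X > 0"
    using finite_fiber[OF X] fiber_nonempty[OF X] by (simp add: card_gt_0_iff)
  ultimately show ?thesis
    using card_rel_eq[OF X Y S] assms(5) by (simp add: card_inverse)
qed

lemma card_in_nbhd_eq_valency:
  assumes X: "fiber \<R> X" and Y: "fiber \<R> Y" and S: "S \<in> \<R>" "S \<subseteq> X \<times> Y"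
    and "card X = card Y" and y: "y \<in> Y"
  shows "card {z. (z, y) \<in> S} = valency S"
  using card_out_nbhd_eq_valency[OF Y converse_rel[OF S(1)], of X y] S(2) y
    valency_converse[OF assms(1-5)] by auto

text \<open>Otherwise all points of X would share their S-neighbours, and a common neighbour y
  would have in-valency card X.\<close>
lemma ex_small_common_out_nbhd:
  assumes X: "fiber \<R> X" and Y: "fiber \<R> Y" "card X = card Y" and S: "S \<in> \<R>" "S \<subseteq> X \<times> Y"
    and "valency S < card Y" and x0: "x0 \<in> X"
  shows "\<exists>x\<in>X. card (out_nbhd S x0 \<inter> out_nbhd S x) < valency S"
proof (rule ccontr)
  assume "\<not> (\<exists>x\<in>X. card (out_nbhd S x0 \<inter> out_nbhd S x) < valency S)"
  then have ge: "valency S \<le> card (out_nbhd S x0 \<inter> out_nbhd S x)" if "x \<in> X" for x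
    using that by (simp add: not_less)
  have fin: "finite (out_nbhd S x0)"
    using finite_fiber[OF Y(1)] out_nbhd_subset[OF S(2)] finite_subset by blast
  have d: "card (out_nbhd S x0) = valency S" using card_out_nbhd_eq_valency[OF X S x0] .
  obtain y where y: "y \<in> out_nbhd S x0"
    using valency_pos[OF X Y(1) S] d by (metis card.empty ex_in_conv less_irrefl)
  have "out_nbhd S x0 \<inter> out_nbhd S x = out_nbhd S x0" if "x \<in> X" for x
    by (rule card_subset_eq[OF fin])
      (use ge[OF that] d card_mono[OF fin, of "out_nbhd S x0 \<inter> out_nbhd S x"] in auto)
  then have "{z. (z, y) \<in> S} = X" using y S(2) by (auto simp: out_nbhd_def)
  then have "card X = valency S"
    using card_in_nbhd_eq_valency[OF X Y(1) S Y(2)] y S(2) by (auto simp: out_nbhd_def)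
  with assms(6) Y(2) show False by simp
qed

lemma valency_Id_on:
  assumes X: "fiber \<R> X"
  shows "valency (Id_on X) = 1"
proof -
  obtain x where x: "x \<in> X" using fiber_nonempty[OF X] by auto
  have "card (out_nbhd (Id_on X) x) = valency (Id_on X)"
    by (rule card_out_nbhd_eq_valency[OF X _ _ x]) (use X in \<open>auto simp: fiber_def\<close>)
  moreover have "out_nbhd (Id_on X) x = {x}" using x by (auto simp: out_nbhd_def)
  ultimately show ?thesis by simp
qed

lemma rels_between_card_3:
  assumes X: "fiber \<R> X" and "card (rels_between \<R> X X) = 3"
  obtains A B where "rels_between \<R> X X = {Id_on X, A, B}" "A \<noteq> B" "A \<noteq> Id_on X" "B \<noteq> Id_on X"
proof -
  have Id: "Id_on X \<in> rels_between \<R> X X" using X by (auto simp: fiber_def rels_between_def)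
  then have "card (rels_between \<R> X X - {Id_on X}) = 2" using assms(2) card_Diff_singleton by simp
  then obtain A B where AB: "rels_between \<R> X X - {Id_on X} = {A, B}" "A \<noteq> B"
    by (auto simp: card_2_iff)
  then have "rels_between \<R> X X = {Id_on X, A, B}" "A \<noteq> Id_on X" "B \<noteq> Id_on X"
    using Id by blast+
  with AB(2) show ?thesis using that by blast
qed

end

locale rank3_fiber = coherent_config +
  fixes X A B
  assumes fiber_X: "fiber \<R> X"
    and rels_X: "rels_between \<R> X X = {Id_on X, A, B}"
    and A_neq_B: "A \<noteq> B" and A_neq_Id: "A \<noteq> Id_on X" and B_neq_Id: "B \<noteq> Id_on X"
begin

lemma A_rel: "A \<in> \<R>" "A \<subseteq> X \<times> X"
  and B_rel: "B \<in> \<R>" "B \<subseteq> X \<times> X"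
  and Id_rel: "Id_on X \<in> \<R>"
  using rels_X by (auto simp: rels_between_def)

lemma finite_X: "finite X"
  using finite_fiber[OF fiber_X] .

lemma card_out_nbhd_A: "x \<in> X \<Longrightarrow> card (out_nbhd A x) = valency A"
  using card_out_nbhd_eq_valency[OF fiber_X A_rel] .

lemma A_irrefl: "(x, x) \<notin> A"
proof
  assume "(x, x) \<in> A"
  moreover from this have "(x, x) \<in> Id_on X" using A_rel(2) by auto
  ultimately show False using rel_unique[OF A_rel(1) Id_rel] A_neq_Id by blast
qed

lemma B_irrefl: "(x, x) \<notin> B"
proof
  assume "(x, x) \<in> B"
  moreover from this have "(x, x) \<in> Id_on X" using B_rel(2) by auto
  ultimately show False using rel_unique[OF B_rel(1) Id_rel] B_neq_Id by blast
qed

lemma A_not_B: "(x, y) \<in> A \<Longrightarrow> (x, y) \<notin> B"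
  using rel_unique[OF A_rel(1) B_rel(1)] A_neq_B by blast

lemma A_or_B:
  assumes "x \<in> X" "y \<in> X" "x \<noteq> y"
  shows "(x, y) \<in> A \<or> (x, y) \<in> B"
  using rels_between_cover[OF fiber_X fiber_X assms(1,2)] rels_X assms(3) by auto

lemma converse_A_cases: "converse A = A \<or> converse A = B"
proof -
  have "converse A \<in> rels_between \<R> X X"
    using converse_rel[OF A_rel(1)] A_rel(2) by (auto simp: rels_between_def)
  moreover have "converse A \<noteq> Id_on X"
    using A_neq_Id by (metis converse_Id_on converse_converse)
  ultimately show ?thesis using rels_X by auto
qed

lemma valency_A_B: "valency A + valency B + 1 = card X"
proof -
  obtain x where "x \<in> X" using fiber_nonempty[OF fiber_X] by auto
  then have "(\<Sum>S\<in>{Id_on X, A, B}. valency S) = card X"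
    using sum_valency_rels_between[OF fiber_X fiber_X] rels_X by simp
  then show ?thesis
    using A_neq_B A_neq_Id B_neq_Id valency_Id_on[OF fiber_X] by simp
qed

end

locale antisymmetric_rank3_fiber = rank3_fiber + assumes converse_A: "converse A = B"
begin

lemma valency_B: "valency B = valency A"
  using card_rel_eq[OF fiber_X fiber_X A_rel] card_rel_eq[OF fiber_X fiber_X B_rel]
    card_inverse[of A] converse_A fiber_nonempty[OF fiber_X] finite_X by simp

text \<open>The number of common S-neighbours of x and x' is an intersection number at (x, x'),
  and every pair of distinct points lies in A in one order or the other.\<close>
lemma common_out_nbhd_number:
  assumes S: "S \<in> \<R>"
  obtains p where "\<And>x x'. x \<in> X \<Longrightarrow> x' \<in> X \<Longrightarrow> x \<noteq> x' \<Longrightarrow>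
    card (out_nbhd S x \<inter> out_nbhd S x') = p"
proof -
  obtain a a' where a: "(a, a') \<in> A" using rel_nonempty[OF A_rel(1)] by auto
  have on_A: "card (out_nbhd S u \<inter> out_nbhd S v) = card (out_nbhd S a \<inter> out_nbhd S a')"
    if "(u, v) \<in> A" for u v
    using intersection_number_eq[OF S converse_rel[OF S] A_rel(1) that a] by simp
  show ?thesis
  proof
    fix x x' assume "x \<in> X" "x' \<in> X" "x \<noteq> x'"
    then have "(x, x') \<in> A \<or> (x', x) \<in> A" using A_or_B converse_A by blast
    then show "card (out_nbhd S x \<inter> out_nbhd S x') = card (out_nbhd S a \<inter> out_nbhd S a')"
      using on_A by (metis Int_commute)
  qed
qed

lemma valency_times_pred_eq:
  assumes Y: "fiber \<R> Y" "card Y = card X" and S: "S \<in> \<R>" "S \<subseteq> X \<times> Y"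
    and x: "x \<in> X" "x' \<in> X" "x \<noteq> x'"
  shows "valency S * (valency S - 1) = (card X - 1) * card (out_nbhd S x \<inter> out_nbhd S x')"
proof -
  let ?d = "valency S"
  obtain p where p: "\<And>x x'. x \<in> X \<Longrightarrow> x' \<in> X \<Longrightarrow> x \<noteq> x' \<Longrightarrow>
      card (out_nbhd S x \<inter> out_nbhd S x') = p"
    using common_out_nbhd_number[OF S(1)] by blast
  have fin: "finite (out_nbhd S x)"
    using finite_fiber[OF Y(1)] out_nbhd_subset[OF S(2)] finite_subset by blast
  have "(\<Sum>z\<in>X - {x}. card {y\<in>out_nbhd S x. (z, y) \<in> S})
      = (\<Sum>y\<in>out_nbhd S x. card {z\<in>X - {x}. (z, y) \<in> S})"
    by (rule sum_card_filter_swap) (use finite_X fin in auto)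
  moreover have "card {y\<in>out_nbhd S x. (z, y) \<in> S} = card (out_nbhd S x \<inter> out_nbhd S x')"
    if "z \<in> X - {x}" for z
  proof -
    have "{y\<in>out_nbhd S x. (z, y) \<in> S} = out_nbhd S x \<inter> out_nbhd S z"
      by (auto simp: out_nbhd_def)
    then show ?thesis using p[of x z] p[OF x] that x(1) by auto
  qed
  moreover have "card {z\<in>X - {x}. (z, y) \<in> S} = ?d - 1" if "y \<in> out_nbhd S x" for y
  proof -
    have "{z\<in>X - {x}. (z, y) \<in> S} = {z. (z, y) \<in> S} - {x}" using S(2) by auto
    moreover have "card {z. (z, y) \<in> S} = ?d"
      using card_in_nbhd_eq_valency[OF fiber_X Y(1) S Y(2)[symmetric]] that S(2)
      by (auto simp: out_nbhd_def)
    ultimately show ?thesis using that by (simp add: out_nbhd_def)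
  qed
  ultimately show ?thesis
    using card_out_nbhd_eq_valency[OF fiber_X S x(1)] x(1) finite_X by (simp add: mult.commute)
qed

lemma card_X_pred_dvd_valency:
  assumes "fiber \<R> Y" "card Y = card X" "S \<in> \<R>" "S \<subseteq> X \<times> Y"
  shows "(card X - 1) dvd valency S * (valency S - 1)"
proof -
  obtain x x' where "(x, x') \<in> A" using rel_nonempty[OF A_rel(1)] by auto
  then have "x \<in> X" "x' \<in> X" "x \<noteq> x'" using A_rel(2) A_irrefl by auto
  then show ?thesis using valency_times_pred_eq[OF assms] by simp
qed

text \<open>Count the pairs (z, y) with z an A-neighbour of x0 and y a common S-neighbour of z
  and x'. Grouping by y, a point y of S(x') contributes an intersection number of A with
  S or with T, according as (x0, y) lies in S or in T; so only the size of
  S(x') \<inter> S(x0) matters, and that size does not depend on x'.\<close>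
lemma sum_common_out_nbhd_A_eq:
  assumes Y: "fiber \<R> Y" and ST: "rels_between \<R> X Y = {S, T}" and x0: "x0 \<in> X"
    and x': "x' \<in> X" "x' \<noteq> x0" and x'': "x'' \<in> X" "x'' \<noteq> x0"
  shows "(\<Sum>z\<in>out_nbhd A x0. card (out_nbhd S z \<inter> out_nbhd S x'))
       = (\<Sum>z\<in>out_nbhd A x0. card (out_nbhd S z \<inter> out_nbhd S x''))"
proof -
  have S: "S \<in> \<R>" "S \<subseteq> X \<times> Y" and T: "T \<in> \<R>" "T \<subseteq> X \<times> Y"
    using ST by (auto simp: rels_between_def)
  have finS: "finite (out_nbhd S x)" for x
    using finite_fiber[OF Y] out_nbhd_subset[OF S(2)] finite_subset by blast
  have finA: "finite (out_nbhd A x0)"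
    using finite_X out_nbhd_subset[OF A_rel(2)] finite_subset by blast
  obtain \<alpha> where \<alpha>: "card (out_nbhd A x \<inter> {z. (z, y) \<in> S}) = \<alpha>" if "(x, y) \<in> S" for x y
    using intersection_number_eq[OF A_rel(1) S(1) S(1)] by (metis out_nbhd_converse)
  obtain \<beta> where \<beta>: "card (out_nbhd A x \<inter> {z. (z, y) \<in> S}) = \<beta>" if "(x, y) \<in> T" for x y
    using intersection_number_eq[OF A_rel(1) S(1) T(1)] by (metis out_nbhd_converse)
  have expand: "(\<Sum>z\<in>out_nbhd A x0. card (out_nbhd S z \<inter> out_nbhd S x))
      = \<alpha> * card (out_nbhd S x \<inter> out_nbhd S x0) + \<beta> * (valency S - card (out_nbhd S x \<inter> out_nbhd S x0))"
    if x: "x \<in> X" for x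
  proof -
    have "(\<Sum>z\<in>out_nbhd A x0. card {y\<in>out_nbhd S x. (z, y) \<in> S})
        = (\<Sum>y\<in>out_nbhd S x. card {z\<in>out_nbhd A x0. (z, y) \<in> S})"
      using finA finS by (rule sum_card_filter_swap)
    also have "\<dots> = (\<Sum>y\<in>out_nbhd S x. if y \<in> out_nbhd S x0 then \<alpha> else \<beta>)"
    proof (rule sum.cong[OF refl])
      fix y assume "y \<in> out_nbhd S x"
      then have "y \<in> Y" using S(2) by (auto simp: out_nbhd_def)
      then have "(x0, y) \<in> S \<or> (x0, y) \<in> T"
        using rels_between_cover[OF fiber_X Y x0] ST by auto
      moreover have "{z\<in>out_nbhd A x0. (z, y) \<in> S} = out_nbhd A x0 \<inter> {z. (z, y) \<in> S}" by auto
      ultimately show "card {z\<in>out_nbhd A x0. (z, y) \<in> S} = (if y \<in> out_nbhd S x0 then \<alpha> else \<beta>)"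
        using \<alpha> \<beta> rel_unique[OF S(1) T(1)] by (auto simp: out_nbhd_def)
    qed
    also have "\<dots> = \<alpha> * card (out_nbhd S x \<inter> out_nbhd S x0) + \<beta> * card (out_nbhd S x - out_nbhd S x0)"
      using sum.If_cases[OF finS, of "\<lambda>y. y \<in> out_nbhd S x0" "\<lambda>_. \<alpha>" "\<lambda>_. \<beta>" x]
      by (simp add: Diff_eq)
    also have "card (out_nbhd S x - out_nbhd S x0) = valency S - card (out_nbhd S x \<inter> out_nbhd S x0)"
      using card_out_nbhd_eq_valency[OF fiber_X S x] card_Diff_subset_Int[of "out_nbhd S x" "out_nbhd S x0"]
        finS[of x] by simp
    finally show ?thesis by (simp add: out_nbhd_def Int_def conj_commute)
  qed
  obtain p where "\<And>x x'. x \<in> X \<Longrightarrow> x' \<in> X \<Longrightarrow> x \<noteq> x' \<Longrightarrow>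
      card (out_nbhd S x \<inter> out_nbhd S x') = p"
    using common_out_nbhd_number[OF S(1)] by blast
  then show ?thesis using expand[OF x'(1)] expand[OF x''(1)] x' x'' x0 by simp
qed

text \<open>Comparing the sums above for x' in A(x0) and for x' in B(x0) shows that two distinct
  points of X have as many common S-neighbours as S-neighbours.\<close>
lemma card_rels_between_neq_2:
  assumes Y: "fiber \<R> Y" "card Y = card X"
  shows "card (rels_between \<R> X Y) \<noteq> 2"
proof
  assume "card (rels_between \<R> X Y) = 2"
  then obtain S T where ST: "rels_between \<R> X Y = {S, T}" by (auto simp: card_2_iff)
  have S: "S \<in> \<R>" "S \<subseteq> X \<times> Y" using ST by (auto simp: rels_between_def)
  obtain p where p: "\<And>x x'. x \<in> X \<Longrightarrow> x' \<in> X \<Longrightarrow> x \<noteq> x' \<Longrightarrow>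
      card (out_nbhd S x \<inter> out_nbhd S x') = p"
    using common_out_nbhd_number[OF S(1)] by blast
  define k where "k = valency A"
  obtain x0 where x0: "x0 \<in> X" using fiber_nonempty[OF fiber_X] by auto
  have k_pos: "k > 0" using valency_pos[OF fiber_X fiber_X A_rel] k_def by simp
  obtain x1 where x1: "x1 \<in> out_nbhd A x0"
    using card_out_nbhd_A[OF x0] k_pos k_def by (metis card.empty ex_in_conv less_irrefl)
  obtain x2 where x2: "x2 \<in> out_nbhd B x0"
    using card_out_nbhd_eq_valency[OF fiber_X B_rel x0] valency_B k_pos k_def
    by (metis card.empty ex_in_conv less_irrefl)
  have x1X: "x1 \<in> X" "x1 \<noteq> x0" using x1 A_rel(2) A_irrefl by (auto simp: out_nbhd_def)
  have x2X: "x2 \<in> X" "x2 \<noteq> x0" "x2 \<notin> out_nbhd A x0"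
    using x2 B_rel(2) B_irrefl A_not_B by (auto simp: out_nbhd_def)
  have finA: "finite (out_nbhd A x0)"
    using finite_X out_nbhd_subset[OF A_rel(2)] finite_subset by blast
  have sum_p: "(\<Sum>z\<in>Z. card (out_nbhd S z \<inter> out_nbhd S x')) = card Z * p"
    if "Z \<subseteq> out_nbhd A x0" "x' \<in> X" "x' \<notin> Z" for Z x'
  proof -
    have "Z \<subseteq> X" using that(1) A_rel(2) by (auto simp: out_nbhd_def)
    then have "(\<Sum>z\<in>Z. card (out_nbhd S z \<inter> out_nbhd S x')) = (\<Sum>z\<in>Z. p)"
      using p that(2,3) by (intro sum.cong refl) blast
    then show ?thesis by simp
  qed
  have "valency S + (k - 1) * p = (\<Sum>z\<in>out_nbhd A x0. card (out_nbhd S z \<inter> out_nbhd S x1))"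
    using sum.remove[OF finA x1, of "\<lambda>z. card (out_nbhd S z \<inter> out_nbhd S x1)"]
      sum_p[of "out_nbhd A x0 - {x1}" x1] card_out_nbhd_eq_valency[OF fiber_X S x1X(1)]
      card_out_nbhd_A[OF x0] finA x1 x1X(1) k_def
    by simp
  also have "\<dots> = (\<Sum>z\<in>out_nbhd A x0. card (out_nbhd S z \<inter> out_nbhd S x2))"
    by (rule sum_common_out_nbhd_A_eq[OF Y(1) ST x0 x1X x2X(1,2)])
  also have "\<dots> = k * p"
    using sum_p[of "out_nbhd A x0" x2] x2X card_out_nbhd_A[OF x0] k_def by simp
  finally have "valency S + (k - 1) * p = k * p" .
  moreover have "k * p = (k - 1) * p + p" using k_pos by (cases k) auto
  ultimately have "valency S = p" by simp
  have "valency S < card Y"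
    using valency_less_card[OF fiber_X Y(1)] ST \<open>card (rels_between \<R> X Y) = 2\<close> by simp
  then obtain x where "x \<in> X" "card (out_nbhd S x0 \<inter> out_nbhd S x) < valency S"
    using ex_small_common_out_nbhd[OF fiber_X Y(1) Y(2)[symmetric] S _ x0] by blast
  then show False
    using p[OF x0] card_out_nbhd_eq_valency[OF fiber_X S x0] \<open>valency S = p\<close> by (cases "x = x0") auto
qed

end

section \<open>Matrices annihilated by a quadratic polynomial\<close>

definition trace :: "'a::comm_ring_1 mat \<Rightarrow> 'a" where
  "trace N = (\<Sum>i<dim_row N. N $$ (i, i))"

lemma trace_mult_comm:
  fixes A B :: "'a::comm_ring_1 mat"
  assumes "A \<in> carrier_mat n m" "B \<in> carrier_mat m n"
  shows "trace (A * B) = trace (B * A)"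
proof -
  have "trace (A * B) = (\<Sum>i<n. \<Sum>j<m. A $$ (i, j) * B $$ (j, i))"
    using assms by (auto simp: trace_def scalar_prod_def lessThan_atLeast0 intro!: sum.cong)
  also have "\<dots> = (\<Sum>j<m. \<Sum>i<n. B $$ (j, i) * A $$ (i, j))"
    by (subst sum.swap) (simp add: mult.commute)
  also have "\<dots> = trace (B * A)"
    using assms by (auto simp: trace_def scalar_prod_def lessThan_atLeast0 intro!: sum.cong)
  finally show ?thesis .
qed

lemma sum_list_two_values:
  assumes "\<forall>e\<in>set es. e = a \<or> e = (b::'a::comm_ring_1)"
  shows "sum_list es = of_nat (length (filter (\<lambda>e. e = a) es)) * a
     + of_nat (length es - length (filter (\<lambda>e. e = a) es)) * b"
  using assms
proof (induction es)
  case (Cons x xs)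
  have "length (filter (\<lambda>e. e = a) xs) \<le> length xs" by simp
  with Cons show ?case by (cases "x = a") (auto simp: Suc_diff_le algebra_simps)
qed simp

lemma eigenvalue_quadratic:
  fixes N :: "'a::field mat"
  assumes N: "N \<in> carrier_mat n n" and NN: "N * N = s \<cdot>\<^sub>m N + t \<cdot>\<^sub>m 1\<^sub>m n"
    and "eigenvalue N e"
  shows "e * e = s * e + t"
proof -
  obtain v where v: "v \<in> carrier_vec n" "v \<noteq> 0\<^sub>v n" "N *\<^sub>v v = e \<cdot>\<^sub>v v"
    using assms unfolding eigenvalue_def eigenvector_def by auto
  have "(e * e) \<cdot>\<^sub>v v = N *\<^sub>v (N *\<^sub>v v)"
    using N v by (simp add: mult_mat_vec smult_smult_assoc)
  also have "\<dots> = (N * N) *\<^sub>v v"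
    by (rule assoc_mult_mat_vec[symmetric]) (use N v in auto)
  also have "\<dots> = (s \<cdot>\<^sub>m N + t \<cdot>\<^sub>m 1\<^sub>m n) *\<^sub>v v" by (simp only: NN)
  also have "\<dots> = (s \<cdot>\<^sub>m N) *\<^sub>v v + (t \<cdot>\<^sub>m 1\<^sub>m n) *\<^sub>v v"
    by (rule add_mult_distrib_mat_vec) (use N v in auto)
  also have "(s \<cdot>\<^sub>m N) *\<^sub>v v = s \<cdot>\<^sub>v (N *\<^sub>v v)" by (rule eq_vecI) (use N v(1) in auto)
  also have "(t \<cdot>\<^sub>m 1\<^sub>m n) *\<^sub>v v = t \<cdot>\<^sub>v v" by (rule eq_vecI) (use N v(1) in auto)
  also have "s \<cdot>\<^sub>v (N *\<^sub>v v) + t \<cdot>\<^sub>v v = (s * e + t) \<cdot>\<^sub>v v"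
    using v by (simp add: add_smult_distrib_vec smult_smult_assoc)
  finally have eq: "(e * e) \<cdot>\<^sub>v v = (s * e + t) \<cdot>\<^sub>v v" .
  obtain i where "i < n" "v $ i \<noteq> 0"
    using v by (metis carrier_vecD eq_vecI index_zero_vec(1) index_zero_vec(2))
  with arg_cong[OF eq, of "\<lambda>x. x $ i"] v(1) show ?thesis by simp
qed

lemma trace_eq_sum_list_eigenvalues:
  fixes N :: "complex mat"
  assumes N: "N \<in> carrier_mat n n" and cp: "char_poly N = (\<Prod>a\<leftarrow>es. [:- a, 1:])"
  shows "trace N = sum_list es"
proof -
  obtain B P Q where "schur_decomposition N es = (B, P, Q)" by (metis prod_cases3)
  from schur_decomposition[OF N cp this]
  have sim: "similar_mat_wit N B P Q" and diag: "diag_mat B = es" by auto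
  from sim N have B: "B \<in> carrier_mat n n" and P: "P \<in> carrier_mat n n" and Q: "Q \<in> carrier_mat n n"
    and QP: "Q * P = 1\<^sub>m n" and NPBQ: "N = P * B * Q"
    unfolding similar_mat_wit_def Let_def by auto
  have "es = map (\<lambda>i. B $$ (i, i)) [0..<n]" using diag B by (simp add: diag_mat_def)
  then have trB: "trace B = sum_list es"
    using B by (simp add: trace_def sum_list_distinct_conv_sum_set lessThan_atLeast0)
  have "trace N = trace ((P * B) * Q)" using NPBQ by simp
  also have "\<dots> = trace (Q * (P * B))" by (rule trace_mult_comm) (use P B Q in auto)
  also have "Q * (P * B) = B" using P B Q QP by (simp add: assoc_mult_mat[symmetric])
  finally show ?thesis using trB by simp
qed

text \<open>A matrix annihilated by a quadratic has at most two eigenvalues: u and its conjugate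
  root s - u.\<close>
lemma trace_quadratic_matrix:
  fixes N :: "complex mat"
  assumes N: "N \<in> carrier_mat n n" and NN: "N * N = s \<cdot>\<^sub>m N + t \<cdot>\<^sub>m 1\<^sub>m n"
    and u: "eigenvalue N u"
  shows "\<exists>b. 1 \<le> b \<and> b \<le> n \<and> trace N = of_nat b * u + of_nat (n - b) * (s - u)"
proof -
  obtain es where cp: "char_poly N = (\<Prod>a\<leftarrow>es. [:- a, 1:])" and len: "length es = n"
    using char_poly_factorized[OF N] by auto
  have roots: "eigenvalue N e \<longleftrightarrow> e \<in> set es" for e
    using eigenvalue_root_char_poly[OF N] cp by (auto simp: poly_prod_list prod_list_zero_iff)
  have two: "\<forall>e\<in>set es. e = u \<or> e = s - u"
  proof
    fix e assume "e \<in> set es"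
    then have "e * e = s * e + t" "u * u = s * u + t"
      using eigenvalue_quadratic[OF N NN] roots u by auto
    then have "(e - u) * (e - (s - u)) = 0" by (simp add: algebra_simps)
    then show "e = u \<or> e = s - u" by auto
  qed
  define b where "b = length (filter (\<lambda>e. e = u) es)"
  have "1 \<le> b"
    using u roots by (simp add: b_def Suc_le_eq filter_empty_conv length_greater_0_conv)
  moreover have "b \<le> n" using len by (metis b_def length_filter_le)
  moreover have "trace N = of_nat b * u + of_nat (n - b) * (s - u)"
    using trace_eq_sum_list_eigenvalues[OF N cp] sum_list_two_values[OF two] len by (simp add: b_def)
  ultimately show ?thesis by blast
qed

lemma complex_quadratic_root:
  fixes a b c :: complex
  assumes "a \<noteq> 0"
  shows "\<exists>x. a * x * x + b * x + c = 0"
proof -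
  define d where "d = csqrt (b * b - 4 * a * c)"
  have d2: "d * d = b * b - 4 * a * c" unfolding d_def by (metis power2_csqrt power2_eq_square)
  define x where "x = (- b + d) / (2 * a)"
  have "a * x * x + b * x + c = (d * d - b * b + 4 * a * c) / (4 * a)"
    unfolding x_def using assms by (simp add: field_simps)
  with d2 show ?thesis by auto
qed

lemma eigenvalue_const_row_sum:
  fixes M :: "'a::field mat"
  assumes M: "M \<in> carrier_mat n n" and "n > 0" and row_sum: "\<And>i. i < n \<Longrightarrow> (\<Sum>l<n. M $$ (i, l)) = c"
  shows "eigenvalue M c"
proof -
  define w :: "'a vec" where "w = vec n (\<lambda>_. 1)"
  have "M *\<^sub>v w = c \<cdot>\<^sub>v w"
    by (rule eq_vecI) (use M row_sum in \<open>auto simp: w_def scalar_prod_def lessThan_atLeast0\<close>)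
  moreover have "w \<noteq> 0\<^sub>v n" using \<open>n > 0\<close> by (metis index_vec index_zero_vec(1) w_def zero_neq_one)
  moreover have "w \<in> carrier_vec n" by (simp add: w_def)
  ultimately show ?thesis using M unfolding eigenvalue_def eigenvector_def by blast
qed

text \<open>For an adjacency matrix G with G^2 = kI + lam G + mu (J - I - G), adding beta J removes
  the J-term once beta solves n beta^2 + (2k - lam + mu) beta + mu = 0.\<close>
lemma shifted_strongly_regular_square:
  fixes G :: "complex mat" and k lam mu \<beta> :: complex and n :: nat
  defines "N \<equiv> mat n n (\<lambda>(i, j). G $$ (i, j) + \<beta>)"
  assumes G: "G \<in> carrier_mat n n"
    and row_sum: "\<And>i. i < n \<Longrightarrow> (\<Sum>l<n. G $$ (i, l)) = k"
    and col_sum: "\<And>j. j < n \<Longrightarrow> (\<Sum>l<n. G $$ (l, j)) = k"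
    and square: "\<And>i j. i < n \<Longrightarrow> j < n \<Longrightarrow>
       (G * G) $$ (i, j) = (lam - mu) * G $$ (i, j) + (if i = j then k - mu else 0) + mu"
    and \<beta>: "of_nat n * \<beta> * \<beta> + (2 * k - (lam - mu)) * \<beta> + mu = 0"
  shows "N * N = (lam - mu) \<cdot>\<^sub>m N + (k - mu) \<cdot>\<^sub>m 1\<^sub>m n"
proof (rule eq_matI)
  fix i j assume "i < dim_row ((lam - mu) \<cdot>\<^sub>m N + (k - mu) \<cdot>\<^sub>m 1\<^sub>m n)"
    "j < dim_col ((lam - mu) \<cdot>\<^sub>m N + (k - mu) \<cdot>\<^sub>m 1\<^sub>m n)"
  then have ij: "i < n" "j < n" by (auto simp: N_def)
  have "(N * N) $$ (i, j) = (\<Sum>l<n. (G $$ (i, l) + \<beta>) * (G $$ (l, j) + \<beta>))"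
    using ij by (simp add: N_def scalar_prod_def lessThan_atLeast0)
  also have "\<dots> = (\<Sum>l<n. G $$ (i, l) * G $$ (l, j))
      + \<beta> * (\<Sum>l<n. G $$ (i, l)) + \<beta> * (\<Sum>l<n. G $$ (l, j)) + of_nat n * \<beta> * \<beta>"
    by (simp add: algebra_simps sum.distrib sum_distrib_left)
  also have "(\<Sum>l<n. G $$ (i, l) * G $$ (l, j)) = (G * G) $$ (i, j)"
    using G ij by (simp add: scalar_prod_def lessThan_atLeast0)
  also have "(G * G) $$ (i, j) + \<beta> * (\<Sum>l<n. G $$ (i, l)) + \<beta> * (\<Sum>l<n. G $$ (l, j))
      + of_nat n * \<beta> * \<beta> = (lam - mu) * G $$ (i, j) + (if i = j then k - mu else 0)
      + (mu + 2 * k * \<beta> + of_nat n * \<beta> * \<beta>)"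
    using square[OF ij] row_sum[OF ij(1)] col_sum[OF ij(2)] by simp
  also have "mu + 2 * k * \<beta> + of_nat n * \<beta> * \<beta> = (lam - mu) * \<beta>"
    using \<beta> by (simp add: algebra_simps)
  also have "(lam - mu) * G $$ (i, j) + (if i = j then k - mu else 0) + (lam - mu) * \<beta>
      = ((lam - mu) \<cdot>\<^sub>m N + (k - mu) \<cdot>\<^sub>m 1\<^sub>m n) $$ (i, j)"
    using ij by (simp add: N_def algebra_simps)
  finally show "(N * N) $$ (i, j) = ((lam - mu) \<cdot>\<^sub>m N + (k - mu) \<cdot>\<^sub>m 1\<^sub>m n) $$ (i, j)" .
qed (auto simp: N_def)

text \<open>The eigenvalue k + n beta of the shifted matrix on the all-ones vector and its
  conjugate root share the trace of G + beta J, namely n beta.\<close>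
lemma strongly_regular_eigenvalue_multiplicities:
  fixes G :: "complex mat" and k lam mu :: complex
  assumes G: "G \<in> carrier_mat n n" and n: "n > 0"
    and diag: "\<And>i. i < n \<Longrightarrow> G $$ (i, i) = 0"
    and row_sum: "\<And>i. i < n \<Longrightarrow> (\<Sum>l<n. G $$ (i, l)) = k"
    and col_sum: "\<And>j. j < n \<Longrightarrow> (\<Sum>l<n. G $$ (l, j)) = k"
    and square: "\<And>i j. i < n \<Longrightarrow> j < n \<Longrightarrow>
       (G * G) $$ (i, j) = (lam - mu) * G $$ (i, j) + (if i = j then k - mu else 0) + mu"
  shows "\<exists>u f c. f + c = n - 1 \<and> u * u = (lam - mu) * u + (k - mu)
     \<and> of_nat f * u + of_nat c * ((lam - mu) - u) = - k
     \<and> k * k = k + k * lam + (of_nat n - 1 - k) * mu"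
proof -
  define s where "s = lam - mu"
  define t where "t = k - mu"
  obtain \<beta> where \<beta>: "of_nat n * \<beta> * \<beta> + (2 * k - s) * \<beta> + mu = 0"
    using complex_quadratic_root[of "of_nat n"] n by auto
  define N where "N = mat n n (\<lambda>(i, j). G $$ (i, j) + \<beta>)"
  have N: "N \<in> carrier_mat n n" unfolding N_def by simp
  have NN: "N * N = s \<cdot>\<^sub>m N + t \<cdot>\<^sub>m 1\<^sub>m n"
    unfolding N_def s_def t_def
    by (rule shifted_strongly_regular_square[OF G row_sum col_sum square]) (use \<beta> s_def in simp_all)
  define u where "u = k + of_nat n * \<beta>"
  have u: "eigenvalue N u"
    by (rule eigenvalue_const_row_sum[OF N n]) (use row_sum in \<open>simp add: N_def sum.distrib u_def\<close>)
  obtain b where b: "1 \<le> b" "b \<le> n" "trace N = of_nat b * u + of_nat (n - b) * (s - u)"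
    using trace_quadratic_matrix[OF N NN u] by blast
  have "trace N = of_nat n * \<beta>" using diag by (simp add: trace_def N_def)
  with b have trace_eq: "of_nat (b - 1) * u + of_nat (n - b) * (s - u) = - k"
    by (simp add: of_nat_diff u_def algebra_simps)
  have uu: "u * u = s * u + t"
    using eigenvalue_quadratic[OF N NN u] .
  have "u * u - (s * u + t) = (k * k - (k + k * lam + (of_nat n - 1 - k) * mu))
      + of_nat n * (of_nat n * \<beta> * \<beta> + (2 * k - s) * \<beta> + mu)"
    by (simp add: u_def s_def t_def algebra_simps)
  then have "k * k = k + k * lam + (of_nat n - 1 - k) * mu" using uu \<beta> by simp
  moreover have "b - 1 + (n - b) = n - 1" using b by simp
  ultimately show ?thesis using trace_eq uu unfolding s_def t_def by blast
qed

section \<open>Parameters of strongly regular graphs on a prime number of vertices\<close>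

lemma rational_root_monic_quadratic_int:
  fixes u :: complex and s t a b :: int
  assumes root: "u * u = of_int s * u + of_int t" and ratio: "of_int a * u = of_int b" and "a \<noteq> 0"
  shows "\<exists>r. u = of_int r"
proof -
  have "complex_of_int (b * b) = (of_int a * u) * (of_int a * u)" using ratio by simp
  also have "\<dots> = of_int a * of_int a * (u * u)" by (simp add: algebra_simps)
  also have "\<dots> = of_int a * of_int a * (of_int s * u + of_int t)" using root by simp
  also have "\<dots> = of_int (s * b * a + t * a * a)" using ratio by (simp add: algebra_simps)
  finally have eq: "b * b = s * b * a + t * a * a" by (simp only: of_int_eq_iff)
  define g where "g = gcd b a"
  have "g \<noteq> 0" using \<open>a \<noteq> 0\<close> by (simp add: g_def)
  obtain b' a' where ba: "b = b' * g" "a = a' * g" "coprime b' a'"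
    using gcd_coprime_exists[of b a] \<open>a \<noteq> 0\<close> unfolding g_def by auto
  have "g * g * (b' * b') = g * g * (s * b' * a' + t * a' * a')"
    using eq by (simp add: ba algebra_simps)
  then have "b' * b' = s * b' * a' + t * a' * a'" using \<open>g \<noteq> 0\<close> by simp
  then have "a' dvd b' * b'" by (metis dvd_add dvd_triv_right mult.assoc mult.commute)
  then have "a' dvd b'" using ba(3) by (simp add: coprime_commute coprime_dvd_mult_left_iff)
  then have "a dvd b" using ba by (metis mult_dvd_mono dvd_refl)
  then obtain r where "b = a * r" by (auto elim: dvdE)
  then show ?thesis using ratio \<open>a \<noteq> 0\<close> by (intro exI[of _ r]) (simp add: mult_left_cancel)
qed

lemma multiple_of_prime_in_range:
  fixes p x :: int
  assumes "p dvd x" "0 < p" "0 \<le> x" "x < 2 * p"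
  shows "x = 0 \<or> x = p"
proof -
  obtain q where q: "x = p * q" using assms(1) by (auto elim: dvdE)
  have "0 \<le> q" using assms(2,3) q by (auto simp: zero_le_mult_iff)
  moreover have "q < 2" using assms(2,4) q by (metis mult.commute mult_less_cancel_left_pos)
  ultimately show ?thesis using q by (auto simp: le_less)
qed

text \<open>Here r and r' are the two integral eigenvalues; the factor k - r divisible by p
  lies in [0, 2k], so it is 0 or p.\<close>
lemma srg_prime_integral_eigenvalue_not_dvd:
  fixes p k lam mu f c r r' :: int
  assumes p: "prime p" and k: "1 \<le> k" "k \<le> p - 2"
    and lm: "0 \<le> lam" "lam \<le> k" "0 \<le> mu" "mu \<le> k" and fc: "0 \<le> f" "0 \<le> c" "f + c = p - 1"
    and sum: "r + r' = lam - mu" and prod: "r * r' = mu - k" and tr: "f * r + c * r' = - k"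
    and factor: "(k - r) * (k - r') = p * mu" and dvd: "p dvd k - r"
  shows False
proof -
  have p1: "p > 1" using p prime_gt_1_int by blast
  have "\<bar>r\<bar> \<le> k"
  proof (cases "r' = 0")
    case False
    then have "\<bar>r\<bar> * 1 \<le> \<bar>r\<bar> * \<bar>r'\<bar>" by (intro mult_left_mono) auto
    also have "\<dots> = k - mu" using prod lm by (simp add: abs_mult[symmetric])
    finally show ?thesis using lm by simp
  qed (use sum lm in simp)
  then have "k - r = 0 \<or> k - r = p" using multiple_of_prime_in_range[OF dvd] p1 k by simp
  then show False
  proof
    assume "k - r = 0"
    then have "mu = 0" using factor p1 by simp
    then have "k * (r' + 1) = 0" using prod \<open>k - r = 0\<close> by (simp add: algebra_simps)
    then have "r' = -1" using k by simp
    then have "(f + 1) * (k + 1) = p" using tr fc \<open>k - r = 0\<close> by (simp add: algebra_simps)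
    then have "k + 1 dvd p" by (metis dvd_triv_right)
    moreover have "0 \<le> k + 1" using k by simp
    ultimately have "k + 1 = 1 \<or> k + 1 = p" using p unfolding prime_int_iff by blast
    then show False using k by linarith
  next
    assume "k - r = p"
    then have "mu = k - r'" using factor p1 by simp
    then have "r' * (r + 1) = 0" using prod by (simp add: algebra_simps)
    then have "r' = 0" using \<open>k - r = p\<close> k by simp
    then have kf: "k * (f + 1) = p * f" using tr \<open>k - r = p\<close> by (simp add: algebra_simps)
    then have "p dvd k * (f + 1)" by simp
    moreover have "\<not> p dvd k" using k zdvd_not_zless by simp
    ultimately have "p dvd f + 1" using p prime_dvd_mult_iff by blast
    then have "f + 1 = p" using multiple_of_prime_in_range[of p "f + 1"] fc p1 by simp
    then show False using kf k p1 by simp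
  qed
qed

lemma srg_prime_integral_eigenvalues:
  fixes p k lam mu f c r r' :: int
  assumes p: "prime p" and k: "1 \<le> k" "k \<le> p - 2"
    and lm: "0 \<le> lam" "lam \<le> k" "0 \<le> mu" "mu \<le> k" and fc: "0 \<le> f" "0 \<le> c" "f + c = p - 1"
    and sum: "r + r' = lam - mu" and prod: "r * r' = mu - k" and tr: "f * r + c * r' = - k"
    and kid: "k * k = k + k * lam + (p - 1 - k) * mu"
  shows False
proof -
  have "(k - r) * (k - r') = k * k - k * (r + r') + r * r'" by (simp add: algebra_simps)
  also have "\<dots> = k * k - k * (lam - mu) + (mu - k)" by (simp only: sum prod)
  also have "\<dots> = p * mu" by (subst kid) (simp add: algebra_simps)
  finally have factor: "(k - r) * (k - r') = p * mu" .
  then have "p dvd k - r \<or> p dvd k - r'" using p prime_dvd_mult_iff by (metis dvd_triv_left)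
  then show False
    using srg_prime_integral_eigenvalue_not_dvd[of p k lam mu f c r r']
      srg_prime_integral_eigenvalue_not_dvd[of p k lam mu c f r' r]
      assms factor by (auto simp: algebra_simps)
qed

text \<open>The case of a conference graph: the two nontrivial eigenvalues have the same
  multiplicity.\<close>
lemma srg_equal_multiplicities_mod_4:
  fixes p k lam mu f :: int
  assumes p: "2 * f + 1 = p" and k: "1 \<le> k" "k \<le> p - 2" and f: "0 \<le> f"
    and tr: "f * (lam - mu) = - k" and kid: "k * k = k + k * lam + (p - 1 - k) * mu"
  shows "p mod 4 = 1"
proof -
  have fk: "k = f * (mu - lam)" using tr by (simp add: algebra_simps)
  then have "f * (mu - lam) > 0" using k by simp
  then have "mu - lam > 0" using f by (simp add: zero_less_mult_iff)
  moreover have "\<not> mu - lam \<ge> 2"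
  proof
    assume "mu - lam \<ge> 2"
    then have "k \<ge> f * 2" using fk f by (simp add: mult_left_mono)
    then show False using k p by linarith
  qed
  ultimately have "mu = lam + 1" "k = f" using fk by auto
  then have "k * k = k * (2 * lam + 2)" using kid p[symmetric] by (simp add: algebra_simps)
  then have "k = 2 * lam + 2" using k by simp
  then show ?thesis using p \<open>k = f\<close> by presburger
qed

text \<open>The parameters of a strongly regular graph on p points are attached to an eigenvalue
  u of multiplicity f + 1 (counting the all-ones vector) whose conjugate root has
  multiplicity c. Unless f = c, u is rational, hence integral.\<close>
lemma srg_eigenvalue_data_prime_3_mod_4:
  fixes p k lam mu f c :: nat and u :: complex
  assumes p: "prime p" "p mod 4 = 3" and k: "1 \<le> k" "k \<le> p - 2"
    and lm: "lam \<le> k" "mu \<le> k" and fc: "f + c = p - 1"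
    and root: "u * u = (of_nat lam - of_nat mu) * u + (of_nat k - of_nat mu)"
    and tr: "of_nat f * u + of_nat c * ((of_nat lam - of_nat mu) - u) = - of_nat k"
    and kid: "of_nat k * of_nat k = of_nat k + of_nat k * of_nat lam
      + (of_nat p - 1 - of_nat k) * (of_nat mu :: complex)"
  shows False
proof -
  have kid_int: "int k * int k = int k + int k * int lam + (int p - 1 - int k) * int mu"
    using kid by (simp only: of_int_eq_iff[symmetric, where 'a = complex]) simp
  have k_int: "1 \<le> int k" "int k \<le> int p - 2" using k prime_ge_2_nat[OF p(1)] by auto
  have fc_int: "int f + int c = int p - 1" using fc prime_ge_2_nat[OF p(1)] by auto
  define s where "s = int lam - int mu"
  show False
  proof (cases "f = c")
    case True
    have "complex_of_int (int f * s) = of_int (- int k)"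
      using tr True by (simp add: s_def algebra_simps)
    then have "int f * s = - int k" by (simp only: of_int_eq_iff)
    then have "int p mod 4 = 1"
      using srg_equal_multiplicities_mod_4[of "int f" "int p" "int k" "int lam" "int mu"]
        fc_int True k_int kid_int by (simp add: s_def)
    then show False using p(2) by presburger
  next
    case False
    have ratio: "of_int (int f - int c) * u = of_int (- int k - int c * s)"
      using tr unfolding s_def by (simp add: algebra_simps)
    have root_s: "u * u = of_int s * u + of_int (int k - int mu)" using root by (simp add: s_def)
    obtain r where r: "u = of_int r"
      using rational_root_monic_quadratic_int[OF root_s ratio] False by auto
    have "complex_of_int (r * (s - r)) = of_int (int mu - int k)"
      using root_s r by (simp add: algebra_simps)
    then have prod: "r * (s - r) = int mu - int k" by (simp only: of_int_eq_iff)
    have "complex_of_int (int f * r + int c * (s - r)) = of_int (- int k)"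
      using tr r by (simp add: s_def)
    then have tr_int: "int f * r + int c * (s - r) = - int k" by (simp only: of_int_eq_iff)
    show False
      by (rule srg_prime_integral_eigenvalues[OF _ k_int _ _ _ _ _ _ fc_int _ prod tr_int kid_int])
        (use p(1) lm in \<open>simp_all add: s_def\<close>)
  qed
qed

definition rel_mat :: "nat \<Rightarrow> (nat \<Rightarrow> 'a) \<Rightarrow> ('a \<times> 'a) set \<Rightarrow> complex mat" where
  "rel_mat n e R = mat n n (\<lambda>(i, j). of_bool ((e i, e j) \<in> R))"

lemma sum_of_bool_reindex:
  assumes "bij_betw e {..<n} X" "finite X"
  shows "(\<Sum>l<n. of_bool (P (e l))) = (of_nat (card {z\<in>X. P z}) :: 'b::semiring_1)"
proof -
  have "(\<Sum>l<n. of_bool (P (e l))) = (\<Sum>z\<in>X. of_bool (P z) :: 'b)"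
    by (rule sum.reindex_bij_betw[OF assms(1)])
  also have "\<dots> = of_nat (card {z\<in>X. P z})" using assms(2) by (simp add: Int_def)
  finally show ?thesis .
qed

context
  fixes n :: nat and e :: "nat \<Rightarrow> 'a" and X R
  assumes e: "bij_betw e {..<n} X" and X: "finite X" and R: "R \<subseteq> X \<times> X"
begin

lemma rel_mat_row_sum:
  assumes "i < n"
  shows "(\<Sum>l<n. rel_mat n e R $$ (i, l)) = of_nat (card (out_nbhd R (e i)))"
proof -
  have "(\<Sum>l<n. rel_mat n e R $$ (i, l)) = (\<Sum>l<n. of_bool ((e i, e l) \<in> R))"
    using assms by (simp add: rel_mat_def)
  also have "\<dots> = of_nat (card {z\<in>X. (e i, z) \<in> R})" by (rule sum_of_bool_reindex[OF e X])
  also have "{z\<in>X. (e i, z) \<in> R} = out_nbhd R (e i)" using R by (auto simp: out_nbhd_def)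
  finally show ?thesis .
qed

lemma rel_mat_col_sum:
  assumes "j < n"
  shows "(\<Sum>l<n. rel_mat n e R $$ (l, j)) = of_nat (card {z. (z, e j) \<in> R})"
proof -
  have "(\<Sum>l<n. rel_mat n e R $$ (l, j)) = (\<Sum>l<n. of_bool ((e l, e j) \<in> R))"
    using assms by (simp add: rel_mat_def)
  also have "\<dots> = of_nat (card {z\<in>X. (z, e j) \<in> R})" by (rule sum_of_bool_reindex[OF e X])
  also have "{z\<in>X. (z, e j) \<in> R} = {z. (z, e j) \<in> R}" using R by auto
  finally show ?thesis .
qed

lemma rel_mat_square:
  assumes "i < n" "j < n"
  shows "(rel_mat n e R * rel_mat n e R) $$ (i, j) = of_nat (card (out_nbhd R (e i) \<inter> {z. (z, e j) \<in> R}))"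
proof -
  have "(rel_mat n e R * rel_mat n e R) $$ (i, j) = (\<Sum>l<n. of_bool ((e i, e l) \<in> R \<and> (e l, e j) \<in> R))"
    using assms by (simp add: rel_mat_def scalar_prod_def lessThan_atLeast0 of_bool_conj)
  also have "\<dots> = of_nat (card {z\<in>X. (e i, z) \<in> R \<and> (z, e j) \<in> R})"
    by (rule sum_of_bool_reindex[OF e X])
  also have "{z\<in>X. (e i, z) \<in> R \<and> (z, e j) \<in> R} = out_nbhd R (e i) \<inter> {z. (z, e j) \<in> R}"
    using R by (auto simp: out_nbhd_def)
  finally show ?thesis .
qed

end

locale symmetric_rank3_fiber = rank3_fiber + assumes converse_A: "converse A = A"
begin

lemma in_nbhd_A: "{z. (z, y) \<in> A} = out_nbhd A y"
  using converse_A by (auto simp: out_nbhd_def)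

lemma card_common_out_nbhd_A:
  obtains lam mu where "lam \<le> valency A" "mu \<le> valency A"
    and "\<And>x y. x \<in> X \<Longrightarrow> y \<in> X \<Longrightarrow> card (out_nbhd A x \<inter> out_nbhd A y)
      = (if x = y then valency A else if (x, y) \<in> A then lam else mu)"
proof -
  have const: "card (out_nbhd A x \<inter> out_nbhd A y) = card (out_nbhd A x' \<inter> out_nbhd A y')"
    if "T \<in> \<R>" "(x, y) \<in> T" "(x', y') \<in> T" for T x y x' y'
    using intersection_number_eq[OF A_rel(1) A_rel(1) that] by (simp add: in_nbhd_A)
  obtain a a' where a: "(a, a') \<in> A" using rel_nonempty[OF A_rel(1)] by auto
  obtain b b' where b: "(b, b') \<in> B" using rel_nonempty[OF B_rel(1)] by auto
  have le_valency: "card (out_nbhd A x \<inter> out_nbhd A y) \<le> valency A" if "x \<in> X" for x y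
  proof -
    have "finite (out_nbhd A x)" using finite_X out_nbhd_subset[OF A_rel(2)] finite_subset by blast
    then have "card (out_nbhd A x \<inter> out_nbhd A y) \<le> card (out_nbhd A x)" by (rule card_mono) auto
    then show ?thesis using card_out_nbhd_eq_valency[OF fiber_X A_rel that] by simp
  qed
  show ?thesis
  proof
    show "card (out_nbhd A a \<inter> out_nbhd A a') \<le> valency A"
      "card (out_nbhd A b \<inter> out_nbhd A b') \<le> valency A"
      using le_valency a b A_rel(2) B_rel(2) by auto
    fix x y assume xy: "x \<in> X" "y \<in> X"
    show "card (out_nbhd A x \<inter> out_nbhd A y) = (if x = y then valency A
      else if (x, y) \<in> A then card (out_nbhd A a \<inter> out_nbhd A a') else card (out_nbhd A b \<inter> out_nbhd A b'))"
    proof (cases "x = y")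
      case False
      then show ?thesis using A_or_B[OF xy False] const[OF A_rel(1) _ a] const[OF B_rel(1) _ b] by auto
    qed (use card_out_nbhd_eq_valency[OF fiber_X A_rel xy(1)] in simp)
  qed
qed

lemma adjacency_eigenvalue_data:
  obtains lam mu f c :: nat and u :: complex
  where "lam \<le> valency A" "mu \<le> valency A" "f + c = card X - 1"
    "u * u = (of_nat lam - of_nat mu) * u + (of_nat (valency A) - of_nat mu)"
    "of_nat f * u + of_nat c * ((of_nat lam - of_nat mu) - u) = - of_nat (valency A)"
    "of_nat (valency A) * of_nat (valency A) = of_nat (valency A) + of_nat (valency A) * of_nat lam
      + (of_nat (card X) - 1 - of_nat (valency A)) * (of_nat mu :: complex)"
proof -
  define n where "n = card X"
  define k where "k = valency A"
  obtain lam mu where lm: "lam \<le> k" "mu \<le> k" and common: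
    "\<And>x y. x \<in> X \<Longrightarrow> y \<in> X \<Longrightarrow> card (out_nbhd A x \<inter> out_nbhd A y)
      = (if x = y then k else if (x, y) \<in> A then lam else mu)"
    using card_common_out_nbhd_A unfolding k_def by metis
  obtain e where e: "bij_betw e {..<n} X"
    using ex_bij_betw_nat_finite[OF finite_X] by (auto simp: n_def lessThan_atLeast0)
  then have eX: "i < n \<Longrightarrow> e i \<in> X" for i by (auto simp: bij_betw_def)
  have e_inj: "i < n \<Longrightarrow> j < n \<Longrightarrow> e i = e j \<longleftrightarrow> i = j" for i j
    using e by (auto simp: bij_betw_def inj_on_def)
  define G where "G = rel_mat n e A"
  have G: "i < n \<Longrightarrow> j < n \<Longrightarrow> G $$ (i, j) = of_bool ((e i, e j) \<in> A)" for i j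
    by (simp add: G_def rel_mat_def)
  have "G \<in> carrier_mat n n" by (simp add: G_def rel_mat_def)
  moreover have "0 < n" using finite_X fiber_nonempty[OF fiber_X] by (simp add: n_def card_gt_0_iff)
  moreover have "G $$ (i, i) = 0" if "i < n" for i using that A_irrefl by (simp add: G)
  moreover have "(\<Sum>l<n. G $$ (i, l)) = of_nat k" if "i < n" for i
    using rel_mat_row_sum[OF e finite_X A_rel(2) that] card_out_nbhd_A[OF eX[OF that]]
    by (simp add: G_def k_def)
  moreover have "(\<Sum>l<n. G $$ (l, j)) = of_nat k" if "j < n" for j
    using rel_mat_col_sum[OF e finite_X A_rel(2) that] card_out_nbhd_A[OF eX[OF that]]
    by (simp add: G_def k_def in_nbhd_A)
  moreover have "(G * G) $$ (i, j)
      = (of_nat lam - of_nat mu) * G $$ (i, j) + (if i = j then of_nat k - of_nat mu else 0) + of_nat mu"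
    if ij: "i < n" "j < n" for i j
    using rel_mat_square[OF e finite_X A_rel(2) ij] common[OF eX[OF ij(1)] eX[OF ij(2)]] e_inj[OF ij] A_irrefl
    by (auto simp: G_def[symmetric] G[OF ij] in_nbhd_A)
  ultimately have "\<exists>(u :: complex) f c. f + c = n - 1
     \<and> u * u = (of_nat lam - of_nat mu) * u + (of_nat k - of_nat mu)
     \<and> of_nat f * u + of_nat c * ((of_nat lam - of_nat mu) - u) = - of_nat k
     \<and> of_nat k * of_nat k = of_nat k + of_nat k * of_nat lam
        + (of_nat n - 1 - of_nat k) * (of_nat mu :: complex)"
    by (rule strongly_regular_eigenvalue_multiplicities)
  then show ?thesis using that lm unfolding k_def n_def by blast
qed

lemma prime_card_X_mod_4:
  assumes "prime (card X)"
  shows "card X mod 4 \<noteq> 3"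
proof
  assume "card X mod 4 = 3"
  moreover obtain lam mu f c :: nat and u :: complex
    where "lam \<le> valency A" "mu \<le> valency A" "f + c = card X - 1"
    "u * u = (of_nat lam - of_nat mu) * u + (of_nat (valency A) - of_nat mu)"
    "of_nat f * u + of_nat c * ((of_nat lam - of_nat mu) - u) = - of_nat (valency A)"
    "of_nat (valency A) * of_nat (valency A) = of_nat (valency A) + of_nat (valency A) * of_nat lam
      + (of_nat (card X) - 1 - of_nat (valency A)) * (of_nat mu :: complex)"
    by (rule adjacency_eigenvalue_data)
  moreover have "1 \<le> valency A" "valency A \<le> card X - 2"
    using valency_pos[OF fiber_X fiber_X A_rel] valency_pos[OF fiber_X fiber_X B_rel] valency_A_B
    by auto
  ultimately show False using srg_eigenvalue_data_prime_3_mod_4 assms by blast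
qed

end

section \<open>Fibers of size 71\<close>

lemma valency_candidates_71:
  fixes d :: nat
  assumes "2 \<le> d" "d \<le> 70" "70 dvd d * (d - 1)"
  shows "d \<in> {15, 21, 35, 36, 50, 56, 70}"
proof -
  have "list_all (\<lambda>d. 70 dvd d * (d - 1) \<longrightarrow> d \<in> {15, 21, 35, 36, 50, 56, 70}) [2..<71]"
    by (simp add: upt_rec dvd_eq_mod_eq_0)
  moreover have "d \<in> set [2..<71]" using assms(1,2) by (subst set_upt) simp
  ultimately show ?thesis using assms(3) unfolding list_all_iff by blast
qed

text \<open>At least 15 times the number of summands is at most 71, so there are three or
  four; four summands would all lie in {15, 21} and make the sum divisible by 3.\<close>
lemma candidate_partitions_71:
  fixes d :: "'b \<Rightarrow> nat"
  assumes F: "finite F" "3 \<le> card F" and d: "\<And>S. S \<in> F \<Longrightarrow> d S \<in> {15, 21, 35, 36, 50, 56, 70}"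
    and sum: "(\<Sum>S\<in>F. d S) = 71"
  shows "d ` F = {15, 21, 35}"
proof -
  have ge: "15 \<le> d S" if "S \<in> F" for S using d[OF that] by auto
  have "15 * card F \<le> 71" using sum_mono[of F "\<lambda>_. 15" d] ge sum by simp
  have bound: "d S + 15 * (card F - 1) \<le> 71" if S: "S \<in> F" for S
  proof -
    have "15 * (card F - 1) \<le> (\<Sum>T\<in>F - {S}. d T)"
      using sum_mono[of "F - {S}" "\<lambda>_. 15" d] ge S F(1) by simp
    then show ?thesis using sum.remove[OF F(1) S, of d] sum by simp
  qed
  show ?thesis
  proof (cases "card F = 3")
    case True
    then obtain S1 S2 S3 where F3: "F = {S1, S2, S3}" "S1 \<noteq> S2" "S2 \<noteq> S3" "S1 \<noteq> S3"
      by (auto simp: card_3_iff)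
    have small: "d S \<in> {15, 21, 35, 36}" if "S \<in> F" for S
      using d[OF that] bound[OF that] True by auto
    then have "d S1 \<in> {15, 21, 35, 36}" "d S2 \<in> {15, 21, 35, 36}" "d S3 \<in> {15, 21, 35, 36}"
      using F3 by auto
    moreover have "d S1 + d S2 + d S3 = 71" using sum F3 by simp
    ultimately show ?thesis unfolding F3 by auto
  next
    case False
    then have "card F = 4" using \<open>15 * card F \<le> 71\<close> F(2) by simp
    then have "3 dvd d S" if "S \<in> F" for S using d[OF that] bound[OF that] by auto
    then have "3 dvd (\<Sum>S\<in>F. d S)" by (simp add: dvd_sum)
    then show ?thesis using sum by simp
  qed
qed

context antisymmetric_rank3_fiber
begin

lemma valency_rels_between_71:
  assumes fY: "fiber \<R> Y" and cX: "card X = 71" and cY: "card Y = 71"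
    and XY_gt: "card (rels_between \<R> X Y) > 1" and no1: "1 \<notin> valency ` rels_between \<R> X Y"
  shows "valency ` rels_between \<R> X Y = {15, 21, 35}"
proof -
  let ?F = "rels_between \<R> X Y"
  have "card ?F \<noteq> 2" using card_rels_between_neq_2[OF fY] cX cY by simp
  with XY_gt have three: "3 \<le> card ?F" by simp
  have candidates: "valency S \<in> {15, 21, 35, 36, 50, 56, 70}" if S: "S \<in> ?F" for S
  proof (rule valency_candidates_71)
    have S': "S \<in> \<R>" "S \<subseteq> X \<times> Y" using S by (auto simp: rels_between_def)
    have "valency S \<noteq> 1" using no1 S by force
    then show "2 \<le> valency S" using valency_pos[OF fiber_X fY S'] by simp
    show "valency S \<le> 70" using valency_less_card[OF fiber_X fY XY_gt S] cY by simp
    show "70 dvd valency S * (valency S - 1)"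
      using card_X_pred_dvd_valency[OF fY _ S'] cX cY by simp
  qed
  obtain x where "x \<in> X" using fiber_nonempty[OF fiber_X] by auto
  then show ?thesis
    using candidate_partitions_71[OF finite_rels_between three candidates]
      sum_valency_rels_between[OF fiber_X fY] cY by simp
qed

end

theorem lemma4p5:
  fixes V :: "'a set" and \<R> :: "('a \<times> 'a) set set" and X Y :: "'a set"
    and m r k :: nat
  assumes cc: "coherent_configuration V \<R>"
    and fX: "fiber \<R> X" and fY: "fiber \<R> Y"
    and m_def: "m = card X" and mY: "card Y = m" and m_prime: "prime m"
    and r_def: "r = card (rels_between \<R> X X)" and r_gt: "r > 2"
    and XY_gt: "card (rels_between \<R> X Y) > 1"
    and k_def: "real k = (real m - 1) / (real r - 1)"
    and km: "(k, m) = (35, 71)"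
    and no1: "1 \<notin> valency ` rels_between \<R> X Y"
  shows "valency ` rels_between \<R> X Y = {15, 21, 35}"
proof -
  interpret coherent_config V \<R> by unfold_locales (rule cc)
  have m: "m = 71" and "35 * (real r - 1) = 70" using km k_def r_gt by (auto simp: field_simps)
  then have "card (rels_between \<R> X X) = 3" using r_def by simp
  then obtain A B where "rels_between \<R> X X = {Id_on X, A, B}" "A \<noteq> B" "A \<noteq> Id_on X" "B \<noteq> Id_on X"
    by (rule rels_between_card_3[OF fX])
  then interpret rank3_fiber V \<R> X A B by unfold_locales (use fX in auto)
  from converse_A_cases show ?thesis
  proof
    assume "converse A = A"
    then interpret symmetric_rank3_fiber V \<R> X A B by unfold_locales
    show ?thesis using prime_card_X_mod_4 m_prime m m_def by simp
  next
    assume "converse A = B"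
    then interpret antisymmetric_rank3_fiber V \<R> X A B by unfold_locales
    show ?thesis using valency_rels_between_71[OF fY _ _ XY_gt no1] m_def mY m by simp
  qed
qed

end
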